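(* In the roundabout exploration process described in the context, for every $t\in[N]$ there are no three distinct agents $a_i,a_j,a_l\in A(t)$ with $D_i(t)\cap D_j(t)\cap D_l(t)\neq\emptyset$.
   Context: Let $n\ge 2$ and $k$ be natural numbers, $T$ a tree on an $n$-element vertex set $V$, and $N=2(n-1)$. Fix a root $r$ and a DFS tour of $T$ starting and ending at $r$ that traverses each edge of $T$ exactly twice, giving a cyclic vertex sequence $(v_1,\dots,v_N,v_{N+1})$ with $v_{N+1}=v_1=r$, and tour edges $e_i=\{v_i,v_{i+1}\}$ for $i\in[N]$. For $i,j\in[N]$ the circular interval $[\![i,j]\!]$ is $\{i,i+1,\dots,j\}$ if $i\le j$ and $\{i,\dots,N,1,\dots,j\}$ if $i>j$. Let $\langle G_1,\dots,G_N\rangle$ be graphs on $V$, each containing all but at most $k$ edges of $T$. Roundabout exploration process: agents $a_1,\dots,a_N$ with initial states $s_i(0)=i$. For steps $t=1,\dots,N$: (Movement) for every $i\in[N]$, if $s_i(t-1)=q$ then $s_i(t)=(q\bmod N)+1$ if $e_q\in E(G_t)$, and $s_i(t)=q$ otherwise. Let $D_i(t)=[\![i,s_i(t)]\!]$ and $D_i(0)=\{i\}$. (Elimination) $A(0)=\{a_1,\dots,a_N\}$; $A(t)$ is obtained from $A(t-1)$ by repeatedly removing an arbitrary agent $a_i$ of the current set with $D_i(t)\subseteq\bigcup D_j(t)$ over the other agents $a_j$ of the current set, until no such agent remains. *)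

theory Defs
  imports Main
begin

definition graph_on :: "'a set \<Rightarrow> 'a set set \<Rightarrow> bool" where
  "graph_on V E \<longleftrightarrow> E \<subseteq> {{u, w} | u w. u \<in> V \<and> w \<in> V \<and> u \<noteq> w}"

definition connected_on :: "'a set \<Rightarrow> 'a set set \<Rightarrow> bool" where
  "connected_on V E \<longleftrightarrow>
     (\<forall>u\<in>V. \<forall>w\<in>V. (\<lambda>x y. {x, y} \<in> E)\<^sup>*\<^sup>* u w)"

definition is_tree :: "'a set \<Rightarrow> 'a set set \<Rightarrow> bool" where
  "is_tree V E \<longleftrightarrow> finite V \<and> V \<noteq> {} \<and> graph_on V E \<and> connected_on V E
                    \<and> card E = card V - 1"

text \<open>A closed tour (v_1,...,v_{N+1}), N = 2(n-1), starting and ending at the root r,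
  whose tour edges are edges of T and which traverses every edge of T exactly twice
  (for a tree this is exactly a DFS / Euler tour).\<close>
definition tree_tour :: "'a set \<Rightarrow> 'a set set \<Rightarrow> 'a \<Rightarrow> nat \<Rightarrow> (nat \<Rightarrow> 'a) \<Rightarrow> bool" where
  "tree_tour V ET r N v \<longleftrightarrow>
     r \<in> V \<and> v 1 = r \<and> v (N + 1) = r \<and>
     (\<forall>i\<in>{1..N}. {v i, v (Suc i)} \<in> ET) \<and>
     (\<forall>e\<in>ET. card {i \<in> {1..N}. {v i, v (Suc i)} = e} = 2)"

definition cinterval :: "nat \<Rightarrow> nat \<Rightarrow> nat \<Rightarrow> nat set" where
  "cinterval N i j = (if i \<le> j then {i..j} else {i..N} \<union> {1..j})"

primrec state :: "nat \<Rightarrow> (nat \<Rightarrow> 'a) \<Rightarrow> (nat \<Rightarrow> 'a set set) \<Rightarrow> nat \<Rightarrow> nat \<Rightarrow> nat" where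
  "state N v G i 0 = i"
| "state N v G i (Suc t) =
     (let q = state N v G i t in
      if {v q, v (Suc q)} \<in> G (Suc t) then (q mod N) + 1 else q)"

definition Dset :: "nat \<Rightarrow> (nat \<Rightarrow> 'a) \<Rightarrow> (nat \<Rightarrow> 'a set set) \<Rightarrow> nat \<Rightarrow> nat \<Rightarrow> nat set" where
  "Dset N v G i t = (if t = 0 then {i} else cinterval N i (state N v G i t))"

text \<open>One elimination step: remove an agent whose interval is covered by the others
  (agents a_i are identified with their indices i).\<close>
definition elim_step :: "(nat \<Rightarrow> nat set) \<Rightarrow> nat set \<Rightarrow> nat set \<Rightarrow> bool" where
  "elim_step D S S' \<longleftrightarrow>
     (\<exists>i\<in>S. D i \<subseteq> (\<Union>j\<in>S - {i}. D j) \<and> S' = S - {i})"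

definition elim_result :: "(nat \<Rightarrow> nat set) \<Rightarrow> nat set \<Rightarrow> nat set \<Rightarrow> bool" where
  "elim_result D S S' \<longleftrightarrow>
     (elim_step D)\<^sup>*\<^sup>* S S' \<and> \<not> (\<exists>S''. elim_step D S' S'')"

end

theory Submission
  imports Defs
begin

text \<open>Each D_i(t) with t \<ge> 1 is a circular interval [[i, s_i(t)]] of [N]. If three of them
  share a point p, measure every interval by how far it reaches from p backwards and
  forwards: the interval reaching furthest backwards together with the one reaching
  furthest forwards covers the third. So the third agent could still be eliminated,
  contradicting that the elimination phase has terminated. Neither the tree nor the
  graphs G_t play any role.\<close>

definition fwd_dist :: "nat \<Rightarrow> nat \<Rightarrow> nat \<Rightarrow> int" where
  "fwd_dist N a b = (int b - int a) mod int N"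

lemma fwd_dist_eq:
  assumes "a \<in> {1..N}" "b \<in> {1..N}"
  shows "fwd_dist N a b = (if a \<le> b then int b - int a else int b - int a + int N)"
proof (cases "a \<le> b")
  case True
  then show ?thesis using assms by (simp add: fwd_dist_def)
next
  case False
  then have "fwd_dist N a b = (int b - int a + int N) mod int N" by (simp add: fwd_dist_def)
  also have "\<dots> = int b - int a + int N" using assms False by (intro mod_pos_pos_trivial) auto
  finally show ?thesis using False by simp
qed

lemma cinterval_subset: "1 \<le> i \<Longrightarrow> j \<le> N \<Longrightarrow> cinterval N i j \<subseteq> {1..N}"
  unfolding cinterval_def by auto

lemma mem_cinterval_iff_fwd_dist:
  assumes "i \<in> {1..N}" "s \<in> {1..N}" "p \<in> {1..N}" "x \<in> {1..N}" "p \<in> cinterval N i s"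
  shows "x \<in> cinterval N i s \<longleftrightarrow> fwd_dist N p x \<le> fwd_dist N p s \<or> fwd_dist N x p \<le> fwd_dist N i p"
  using assms unfolding fwd_dist_eq[OF assms(3,4)] fwd_dist_eq[OF assms(3,2)]
    fwd_dist_eq[OF assms(4,3)] fwd_dist_eq[OF assms(1,3)] cinterval_def
  by (auto split: if_splits)

lemma cinterval_through_point_cover:
  assumes "finite T" "T \<noteq> {}" "T \<subseteq> {1..N}"
    and s: "\<And>y. y \<in> T \<Longrightarrow> s y \<in> {1..N}"
    and p: "p \<in> {1..N}" "\<And>y. y \<in> T \<Longrightarrow> p \<in> cinterval N y (s y)"
  obtains X Y where "X \<in> T" "Y \<in> T"
    "\<And>Z. Z \<in> T \<Longrightarrow> cinterval N Z (s Z) \<subseteq> cinterval N X (s X) \<union> cinterval N Y (s Y)"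
proof -
  define behind where "behind y = fwd_dist N y p" for y
  define ahead where "ahead y = fwd_dist N p (s y)" for y
  have "Max (behind ` T) \<in> behind ` T" "Max (ahead ` T) \<in> ahead ` T"
    using assms(1,2) by simp_all
  then obtain X Y where X: "X \<in> T" "behind X = Max (behind ` T)"
    and Y: "Y \<in> T" "ahead Y = Max (ahead ` T)" by (metis imageE)
  have cover: "cinterval N Z (s Z) \<subseteq> cinterval N X (s X) \<union> cinterval N Y (s Y)" if Z: "Z \<in> T" for Z
  proof
    fix x assume x: "x \<in> cinterval N Z (s Z)"
    have "1 \<le> Z" "s Z \<le> N" using Z s assms(3) by auto
    then have "x \<in> {1..N}" using x cinterval_subset by blast
    then have mem: "x \<in> cinterval N y (s y) \<longleftrightarrow> fwd_dist N p x \<le> ahead y \<or> fwd_dist N x p \<le> behind y"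
      if "y \<in> T" for y
      unfolding behind_def ahead_def using that assms(3) s p by (intro mem_cinterval_iff_fwd_dist) auto
    have "behind Z \<le> behind X" "ahead Z \<le> ahead Y" using X Y Z assms(1) by simp_all
    then show "x \<in> cinterval N X (s X) \<union> cinterval N Y (s Y)"
      using x mem[OF Z] mem[OF X(1)] mem[OF Y(1)] by auto
  qed
  show thesis by (rule that[OF X(1) Y(1) cover])
qed

lemma three_cintervals_through_point:
  assumes "{i, j, l} \<subseteq> {1..N}" "i \<noteq> j" "i \<noteq> l" "j \<noteq> l"
    and "\<And>y. y \<in> {i, j, l} \<Longrightarrow> s y \<in> {1..N}"
    and "p \<in> {1..N}" "\<And>y. y \<in> {i, j, l} \<Longrightarrow> p \<in> cinterval N y (s y)"
  obtains Z where "Z \<in> {i, j, l}"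
    "cinterval N Z (s Z) \<subseteq> (\<Union>y\<in>{i, j, l} - {Z}. cinterval N y (s y))"
proof -
  obtain X Y where XY: "X \<in> {i, j, l}" "Y \<in> {i, j, l}"
    "\<And>Z. Z \<in> {i, j, l} \<Longrightarrow> cinterval N Z (s Z) \<subseteq> cinterval N X (s X) \<union> cinterval N Y (s Y)"
    using cinterval_through_point_cover[of "{i, j, l}" N s p] assms by blast
  obtain Z where Z: "Z \<in> {i, j, l}" "Z \<noteq> X" "Z \<noteq> Y" using XY(1,2) assms(2-4) by blast
  then have "cinterval N X (s X) \<union> cinterval N Y (s Y) \<subseteq> (\<Union>y\<in>{i, j, l} - {Z}. cinterval N y (s y))"
    using XY(1,2) by blast
  then show thesis using that[OF Z(1)] XY(3)[OF Z(1)] by blast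
qed

lemma elim_step_subset: "elim_step D S S' \<Longrightarrow> S' \<subseteq> S"
  unfolding elim_step_def by auto

lemma elim_steps_subset: "(elim_step D)\<^sup>*\<^sup>* S S' \<Longrightarrow> S' \<subseteq> S"
  by (induction rule: rtranclp_induct) (auto dest: elim_step_subset)

lemma elim_result_not_covered:
  assumes "elim_result D S S'" "T \<subseteq> S'" "Z \<in> T"
  shows "\<not> D Z \<subseteq> (\<Union>y\<in>T - {Z}. D y)"
proof
  assume "D Z \<subseteq> (\<Union>y\<in>T - {Z}. D y)"
  also have "\<dots> \<subseteq> (\<Union>y\<in>S' - {Z}. D y)" using assms(2) by blast
  finally have "elim_step D S' (S' - {Z})" using assms(2,3) unfolding elim_step_def by blast
  then show False using assms(1) unfolding elim_result_def by blast
qed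

lemma elim_rounds_subset:
  fixes A :: "nat \<Rightarrow> nat set"
  assumes "A 0 = S" "\<forall>t\<in>{1..M}. elim_result (D t) (A (t - 1)) (A t)"
  shows "t \<le> M \<Longrightarrow> A t \<subseteq> S"
proof (induction t)
  case (Suc t)
  then have "Suc t \<in> {1..M}" by simp
  then have "elim_result (D (Suc t)) (A t) (A (Suc t))" using assms(2) by (metis diff_Suc_1)
  then show ?case using Suc elim_steps_subset unfolding elim_result_def by fastforce
qed (simp add: assms(1))

lemma state_range: "N \<ge> 1 \<Longrightarrow> i \<in> {1..N} \<Longrightarrow> state N v G i t \<in> {1..N}"
proof (induction t)
  case (Suc t)
  have "Suc (state N v G i t mod N) \<le> N" using Suc.prems by (simp add: Suc_le_eq)
  then show ?case using Suc by (auto simp: Let_def)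
qed simp

theorem lemma6:
  fixes V :: "'a set" and ET :: "'a set set" and n k N :: nat and r :: 'a
    and v :: "nat \<Rightarrow> 'a" and G :: "nat \<Rightarrow> 'a set set" and A :: "nat \<Rightarrow> nat set"
  assumes "n \<ge> 2" and "card V = n"
    and "is_tree V ET"
    and "N = 2 * (n - 1)"
    and "tree_tour V ET r N v"
    and "\<forall>t\<in>{1..N}. graph_on V (G t) \<and> card (ET - G t) \<le> k"
    and "A 0 = {1..N}"
    and "\<forall>t\<in>{1..N}. elim_result (\<lambda>i. Dset N v G i t) (A (t - 1)) (A t)"
    and "t \<in> {1..N}"
  shows "\<not> (\<exists>i\<in>A t. \<exists>j\<in>A t. \<exists>l\<in>A t. i \<noteq> j \<and> i \<noteq> l \<and> j \<noteq> l \<and>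
             Dset N v G i t \<inter> Dset N v G j t \<inter> Dset N v G l t \<noteq> {})"
proof
  assume "\<exists>i\<in>A t. \<exists>j\<in>A t. \<exists>l\<in>A t. i \<noteq> j \<and> i \<noteq> l \<and> j \<noteq> l \<and>
             Dset N v G i t \<inter> Dset N v G j t \<inter> Dset N v G l t \<noteq> {}"
  then obtain i j l p where ijl: "{i, j, l} \<subseteq> A t" "i \<noteq> j" "i \<noteq> l" "j \<noteq> l"
    and p: "\<And>y. y \<in> {i, j, l} \<Longrightarrow> p \<in> Dset N v G y t" by blast
  define s where "s y = state N v G y t" for y
  have N: "N \<ge> 1" using assms(1,4) by simp
  have D: "Dset N v G y t = cinterval N y (s y)" for y
    using assms(9) by (simp add: Dset_def s_def)
  have agents: "{i, j, l} \<subseteq> {1..N}"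
    using ijl(1) elim_rounds_subset[OF assms(7,8)] assms(9) by fastforce
  have s_range: "\<And>y. y \<in> {i, j, l} \<Longrightarrow> s y \<in> {1..N}"
    using agents state_range[OF N] by (auto simp: s_def)
  have p_arcs: "\<And>y. y \<in> {i, j, l} \<Longrightarrow> p \<in> cinterval N y (s y)"
    using p unfolding D .
  have "1 \<le> i" "s i \<le> N" using agents s_range[of i] by auto
  then have "p \<in> {1..N}" using p_arcs[of i] cinterval_subset by blast
  then obtain Z where "Z \<in> {i, j, l}"
    "cinterval N Z (s Z) \<subseteq> (\<Union>y\<in>{i, j, l} - {Z}. cinterval N y (s y))"
    using three_cintervals_through_point[OF agents ijl(2-4) s_range _ p_arcs] by blast
  then show False
    using elim_result_not_covered[OF assms(8)[rule_format, OF assms(9)] ijl(1)] unfolding D by blast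
qed

end
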